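(* Under the setup in the context, assume $V_M^TV_A=I$. Let $\psi^{(k)}_j$ be defined by $\psi^{(0)}_j=0$ and $\psi_j^{(k)} = \psi_j^{(k-1)} + \frac{\sigma_{A,j}^2}{\sigma^2_{M,j}+\alpha^2}\big(1-\frac{\sigma_{A,j}^2}{\sigma^2_{M,j}+\alpha^2}\big)^{k-1}$ for $k\ge1$. Define $\phi^{(0)}_j=0$ and, for $k\ge1$, $$\phi_{j}^{(k)} = \phi_{j}^{(k-1)} + \left(\sigma_{M,j}^2+\alpha^2\right)^{-1}\Big[\left(\sigma_{M,j}^2+\alpha^2\right)\big(\psi_j^{(k)}-\psi_j^{(k-1)}\big) + \Delta^{(k)}_j -\alpha^2\phi^{(k-1)}_{j}\Big],$$ where $$\Delta^{(k)}_j = \frac{\alpha^2\sigma_{A,j}^2}{\sigma_{M,j}^2+\alpha^2}\sum_{i=0}^{k-2}\left(1-\frac{\sigma_{A,j}^2}{\sigma_{M,j}^2+\alpha^2}\right)^i\phi_{j}^{(k-2-i)}$$ (empty sum $=0$). Then for every $k\ge0$, $$x^{(k)}_{IR} = \sum_{j=1}^n \phi_j^{(k)}\frac{u^T_{A,j}b}{\sigma_{A,j}}v_{M,j}.$$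
   Context: Let $m\ge n$ and $A\in\mathbb{R}^{m\times n}$ with singular value decomposition $A=U_A\Sigma_AV_A^T$, where $U_A\in\mathbb{R}^{m\times m}$, $V_A\in\mathbb{R}^{n\times n}$ are orthogonal with columns $u_{A,j}$, $v_{A,j}$, and $\Sigma_A\in\mathbb{R}^{m\times n}$ is diagonal with diagonal entries $\sigma_{A,1}\ge\dots\ge\sigma_{A,n}>0$. Let $b\in\mathbb{R}^m$ and $\alpha>0$. Let $V_M\in\mathbb{R}^{n\times n}$ be orthogonal with columns $v_{M,j}$, let $\sigma_{M,1},\dots,\sigma_{M,n}\ge 0$ be given reals, let $D_M=\mathrm{diag}(d_{M,1},\dots,d_{M,n})$ with $d_{M,j}=(\sigma_{M,j}^2+\alpha^2)^{1/2}$, and let $M=D_MV_M^T$. The iterative refinement iterates for the Tikhonov problem are $x^{(0)}_{IR}=0$ and $x^{(k)}_{IR} = x^{(k-1)}_{IR} + (M^TM)^{-1}A^T(b-Ax^{(k-1)}_{IR}) - \alpha^2 (M^TM)^{-1}x^{(k-1)}_{IR}$ for $k\ge1$. (The paper intends the bracketed quantity to be computed in a high precision and the preconditioner in a low precision; the statement here is the exact-arithmetic identity.) *)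

theory Defs
  imports Complex_Main "Jordan_Normal_Form.Matrix"
begin

definition orth_mat :: "nat \<Rightarrow> real mat \<Rightarrow> bool" where
  "orth_mat n Q \<longleftrightarrow> Q \<in> carrier_mat n n \<and> transpose_mat Q * Q = 1\<^sub>m n \<and> Q * transpose_mat Q = 1\<^sub>m n"

definition inv_mat :: "nat \<Rightarrow> real mat \<Rightarrow> real mat" where
  "inv_mat n X = (THE B. B \<in> carrier_mat n n \<and> X * B = 1\<^sub>m n \<and> B * X = 1\<^sub>m n)"

fun x_IR :: "real mat \<Rightarrow> real mat \<Rightarrow> real \<Rightarrow> real vec \<Rightarrow> nat \<Rightarrow> real vec" where
  "x_IR A M \<alpha> b 0 = 0\<^sub>v (dim_col A)"
| "x_IR A M \<alpha> b (Suc k) =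
     (let x = x_IR A M \<alpha> b k; P = inv_mat (dim_col A) (transpose_mat M * M) in
      x + P *\<^sub>v (transpose_mat A *\<^sub>v (b - A *\<^sub>v x)) - (\<alpha>\<^sup>2) \<cdot>\<^sub>v (P *\<^sub>v x))"

(* psi_j^(k) with sA = sigma_{A,j}, sM = sigma_{M,j} *)
fun psi :: "real \<Rightarrow> real \<Rightarrow> real \<Rightarrow> nat \<Rightarrow> real" where
  "psi sA sM \<alpha> 0 = 0"
| "psi sA sM \<alpha> (Suc k) = psi sA sM \<alpha> k
     + sA\<^sup>2 / (sM\<^sup>2 + \<alpha>\<^sup>2) * (1 - sA\<^sup>2 / (sM\<^sup>2 + \<alpha>\<^sup>2)) ^ k"

(* phi_j^(k); the Delta term at step k = Suc k' sums i = 0 .. k-2 = k'-1, i.e. i < k' *)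
function phi :: "real \<Rightarrow> real \<Rightarrow> real \<Rightarrow> nat \<Rightarrow> real" where
  "phi sA sM \<alpha> 0 = 0"
| "phi sA sM \<alpha> (Suc k) =
     (let d2 = sM\<^sup>2 + \<alpha>\<^sup>2; r = sA\<^sup>2 / d2;
          \<Delta> = \<alpha>\<^sup>2 * sA\<^sup>2 / d2 * (\<Sum>i<k. (1 - r) ^ i * phi sA sM \<alpha> (k - 1 - i))
      in phi sA sM \<alpha> k + inverse d2 *
           (d2 * (psi sA sM \<alpha> (Suc k) - psi sA sM \<alpha> k) + \<Delta> - \<alpha>\<^sup>2 * phi sA sM \<alpha> k))"
  by pat_completeness auto
termination
  by (relation "measure (\<lambda>(_,_,_,k). k)") auto

end

theory Submission
  imports Defs
begin

(* Since V_M^T V_A = I, the matrices A = U_A Sigma_A V_M^T and M^T M = V_M D_M^2 V_M^T share the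
   right singular vectors V_M.  In the coordinates x = V_M w one refinement step therefore acts
   diagonally: with c_j = u_{A,j}^T b / sigma_{A,j} and d_j = sigma_{M,j}^2 + alpha^2, the coordinate
   phi c_j is mapped to (phi + (sigma_{A,j}^2 (1 - phi) - alpha^2 phi) / d_j) c_j.
   The coefficients phi_j^(k) obey the same one-step recursion, because (with r = sigma_{A,j}^2 / d_j)
   an induction gives 1 - phi^(k) = (1 - r)^k + (alpha^2 / d_j) sum_{i<k} (1 - r)^i phi^(k-1-i),
   which is exactly what is needed to absorb the Delta term. *)

lemma sum_lessThan_Suc_power_conv:
  fixes q :: "'a::comm_semiring_1"
  shows "(\<Sum>i<Suc k. q ^ i * f (k - i)) = f k + q * (\<Sum>i<k. q ^ i * f (k - 1 - i))"
  by (simp add: sum.lessThan_Suc_shift sum_distrib_left mult.assoc del: sum.lessThan_Suc)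

lemma phi_Suc_expanded:
  fixes sA sM \<alpha> :: real
  defines "r \<equiv> sA\<^sup>2 / (sM\<^sup>2 + \<alpha>\<^sup>2)" and "a \<equiv> \<alpha>\<^sup>2 / (sM\<^sup>2 + \<alpha>\<^sup>2)"
  shows "phi sA sM \<alpha> (Suc k) = phi sA sM \<alpha> k + r * (1 - r) ^ k
    + a * r * (\<Sum>i<k. (1 - r) ^ i * phi sA sM \<alpha> (k - 1 - i)) - a * phi sA sM \<alpha> k"
proof -
  define d where "d = sM\<^sup>2 + \<alpha>\<^sup>2"
  define S where "S = (\<Sum>i<k. (1 - r) ^ i * phi sA sM \<alpha> (k - 1 - i))"
  have "phi sA sM \<alpha> (Suc k) = phi sA sM \<alpha> k
      + inverse d * (d * (r * (1 - r) ^ k) + \<alpha>\<^sup>2 * sA\<^sup>2 / d * S - \<alpha>\<^sup>2 * phi sA sM \<alpha> k)"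
    by (simp add: Let_def r_def d_def S_def)
  also have "\<dots> = phi sA sM \<alpha> k + r * (1 - r) ^ k + a * r * S - a * phi sA sM \<alpha> k"
    unfolding a_def r_def d_def[symmetric]
    by (cases "d = 0") (simp_all add: field_simps)
  finally show ?thesis unfolding S_def .
qed

lemma one_minus_phi:
  fixes sA sM \<alpha> :: real
  defines "r \<equiv> sA\<^sup>2 / (sM\<^sup>2 + \<alpha>\<^sup>2)" and "a \<equiv> \<alpha>\<^sup>2 / (sM\<^sup>2 + \<alpha>\<^sup>2)"
  shows "1 - phi sA sM \<alpha> k = (1 - r) ^ k + a * (\<Sum>i<k. (1 - r) ^ i * phi sA sM \<alpha> (k - 1 - i))"
proof (induction k)
  case 0
  then show ?case by simp
next
  case (Suc k)
  then show ?case
    unfolding phi_Suc_expanded[of sA sM \<alpha> k, folded r_def a_def]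
    by (simp add: sum_lessThan_Suc_power_conv algebra_simps del: sum.lessThan_Suc)
qed

lemma phi_Suc:
  "phi sA sM \<alpha> (Suc k) = phi sA sM \<alpha> k
    + (sA\<^sup>2 * (1 - phi sA sM \<alpha> k) - \<alpha>\<^sup>2 * phi sA sM \<alpha> k) / (sM\<^sup>2 + \<alpha>\<^sup>2)"
proof -
  define r where "r = sA\<^sup>2 / (sM\<^sup>2 + \<alpha>\<^sup>2)"
  define a where "a = \<alpha>\<^sup>2 / (sM\<^sup>2 + \<alpha>\<^sup>2)"
  have "phi sA sM \<alpha> (Suc k) = phi sA sM \<alpha> k + r * (1 - phi sA sM \<alpha> k) - a * phi sA sM \<alpha> k"
    unfolding phi_Suc_expanded one_minus_phi r_def a_def by (simp add: algebra_simps)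
  then show ?thesis by (simp add: r_def a_def diff_divide_distrib)
qed

lemma inv_mat_eqI:
  assumes "X \<in> carrier_mat n n" "Y \<in> carrier_mat n n" "X * Y = 1\<^sub>m n" "Y * X = 1\<^sub>m n"
  shows "inv_mat n X = Y"
  unfolding inv_mat_def
proof (rule the_equality)
  fix Z assume Z: "Z \<in> carrier_mat n n \<and> X * Z = 1\<^sub>m n \<and> Z * X = 1\<^sub>m n"
  have "Z = Z * (X * Y)" using Z assms by (simp add: right_mult_one_mat[of Z n n])
  also have "\<dots> = (Z * X) * Y" using Z assms by (intro assoc_mult_mat[symmetric]) auto
  also have "\<dots> = Y" using Z assms by simp
  finally show "Z = Y" .
qed (use assms in auto)

lemma orth_mat_carrier: "orth_mat n Q \<Longrightarrow> Q \<in> carrier_mat n n"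
  unfolding orth_mat_def by simp

lemma orth_mat_eq_of_transpose_mult:
  assumes "orth_mat n Q" "W \<in> carrier_mat n n" "transpose_mat Q * W = 1\<^sub>m n"
  shows "W = Q"
proof -
  have Q: "Q \<in> carrier_mat n n" using assms(1) by (rule orth_mat_carrier)
  have "W = (Q * transpose_mat Q) * W" using assms(1,2) unfolding orth_mat_def by simp
  also have "\<dots> = Q" using Q assms(2,3) by (simp add: assoc_mult_mat[of Q n n _ n W n])
  finally show ?thesis .
qed

lemma orth_mat_transpose_mult_vec_cancel:
  assumes "orth_mat n Q" "y \<in> carrier_vec n"
  shows "transpose_mat Q *\<^sub>v (Q *\<^sub>v y) = y"
  using assms by (simp add: orth_mat_def assoc_mult_mat_vec[symmetric, of _ n n Q n y])

lemma mult_transpose_orth_mat_vec: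
  assumes "orth_mat n Q" "X \<in> carrier_mat p n" "z \<in> carrier_vec n"
  shows "(X * transpose_mat Q) *\<^sub>v (Q *\<^sub>v z) = X *\<^sub>v z"
  using assms orth_mat_carrier[OF assms(1)]
  by (simp add: orth_mat_transpose_mult_vec_cancel)

lemma orth_mat_transpose_mult_cancel:
  assumes "orth_mat n Q" "Z \<in> carrier_mat n k"
  shows "transpose_mat Q * (Q * Z) = Z"
  using assms by (simp add: orth_mat_def assoc_mult_mat[symmetric, of _ n n Q n Z k])

lemma orth_conj_mult:
  assumes "orth_mat n Q" "X \<in> carrier_mat n n" "Y \<in> carrier_mat n n"
  shows "(Q * X * transpose_mat Q) * (Q * Y * transpose_mat Q) = Q * (X * Y) * transpose_mat Q"
  using assms orth_mat_carrier[OF assms(1)]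
  by (simp add: assoc_mult_mat[of _ n n _ n _ n] orth_mat_transpose_mult_cancel[OF assms(1), of _ n])

lemma inv_mat_orth_conj:
  assumes "orth_mat n Q" "X \<in> carrier_mat n n" "Y \<in> carrier_mat n n"
    and "X * Y = 1\<^sub>m n" "Y * X = 1\<^sub>m n"
  shows "inv_mat n (Q * X * transpose_mat Q) = Q * Y * transpose_mat Q"
proof (rule inv_mat_eqI)
  have Q: "Q \<in> carrier_mat n n" using assms(1) by (rule orth_mat_carrier)
  have one: "Q * 1\<^sub>m n * transpose_mat Q = 1\<^sub>m n" using assms(1) Q unfolding orth_mat_def by simp
  show "Q * X * transpose_mat Q * (Q * Y * transpose_mat Q) = 1\<^sub>m n"
       "Q * Y * transpose_mat Q * (Q * X * transpose_mat Q) = 1\<^sub>m n"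
    using assms by (simp_all add: orth_conj_mult one)
qed (use assms orth_mat_carrier[OF assms(1)] in auto)

lemma transpose_mat_diag[simp]: "transpose_mat (mat_diag n f) = mat_diag n f"
  unfolding mat_diag_def by (rule eq_matI) auto

lemma transpose_mult_self_diag_transpose:
  fixes Q :: "'a::comm_semiring_1 mat"
  assumes "Q \<in> carrier_mat n n"
  shows "transpose_mat (mat_diag n f * transpose_mat Q) * (mat_diag n f * transpose_mat Q)
    = Q * mat_diag n (\<lambda>j. (f j)\<^sup>2) * transpose_mat Q"
proof -
  let ?D = "mat_diag n f"
  have D: "?D * transpose_mat Q \<in> carrier_mat n n"
    using assms by (intro mult_carrier_mat[of _ n n]) auto
  have "transpose_mat (?D * transpose_mat Q) * (?D * transpose_mat Q) = Q * ?D * (?D * transpose_mat Q)"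
    using assms by (simp add: transpose_mult[of _ n n _ n])
  also have "\<dots> = Q * (?D * (?D * transpose_mat Q))"
    using assms D by (intro assoc_mult_mat[of _ n n _ n _ n]) auto
  also have "?D * (?D * transpose_mat Q) = (?D * ?D) * transpose_mat Q"
    using assms by (intro assoc_mult_mat[of _ n n _ n _ n, symmetric]) auto
  also have "Q * \<dots> = Q * (?D * ?D) * transpose_mat Q"
    using assms by (intro assoc_mult_mat[of _ n n _ n _ n, symmetric]) auto
  finally show ?thesis by (simp add: power2_eq_square)
qed

lemma index_mult_mat_vec_diag:
  assumes "X \<in> carrier_mat p q" "v \<in> carrier_vec q" "i < p" "i < q"
    and "\<And>i j. i < p \<Longrightarrow> j < q \<Longrightarrow> X $$ (i, j) = (if i = j then f j else 0)"
  shows "(X *\<^sub>v v) $ i = f i * v $ i"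
proof -
  have "(X *\<^sub>v v) $ i = (\<Sum>j<q. X $$ (i, j) * v $ j)"
    using assms(1-3) by (simp add: scalar_prod_def lessThan_atLeast0)
  also have "\<dots> = (\<Sum>j<q. if j = i then f i * v $ i else 0)"
    using assms(3,5) by (intro sum.cong) auto
  finally show ?thesis using assms(4) by simp
qed

lemma refinement_step_orth_coords:
  assumes U: "orth_mat m U" and V: "orth_mat n V"
    and S: "S \<in> carrier_mat m n" and E: "E \<in> carrier_mat n n"
    and b: "b \<in> carrier_vec m" and w: "w \<in> carrier_vec n"
  defines "A \<equiv> U * S * transpose_mat V" and "P \<equiv> V * E * transpose_mat V"
  shows "V *\<^sub>v w + P *\<^sub>v (transpose_mat A *\<^sub>v (b - A *\<^sub>v (V *\<^sub>v w))) - c \<cdot>\<^sub>v (P *\<^sub>v (V *\<^sub>v w))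
    = V *\<^sub>v (w + E *\<^sub>v (transpose_mat S *\<^sub>v (transpose_mat U *\<^sub>v b - S *\<^sub>v w)) - c \<cdot>\<^sub>v (E *\<^sub>v w))"
    (is "?lhs = _")
proof -
  have Uc: "U \<in> carrier_mat m m" and Vc: "V \<in> carrier_mat n n"
    using U V by (simp_all add: orth_mat_carrier)
  have Ut: "transpose_mat U \<in> carrier_mat m m" and St: "transpose_mat S \<in> carrier_mat n m"
    using Uc S by simp_all
  define r where "r = transpose_mat U *\<^sub>v b - S *\<^sub>v w"
  have r: "r \<in> carrier_vec m"
    unfolding r_def using Ut S b w by simp
  have A_V: "A *\<^sub>v (V *\<^sub>v w) = U *\<^sub>v (S *\<^sub>v w)"
    unfolding A_def using Uc S w by (simp add: mult_transpose_orth_mat_vec[OF V, of _ m])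
  have P_V: "P *\<^sub>v (V *\<^sub>v z) = V *\<^sub>v (E *\<^sub>v z)" if "z \<in> carrier_vec n" for z
    unfolding P_def using Vc E that by (subst mult_transpose_orth_mat_vec[OF V]) auto
  have At: "transpose_mat A = V * (transpose_mat S * transpose_mat U)"
    using Vc unfolding A_def transpose_mult[OF mult_carrier_mat[OF Uc S] transpose_carrier_mat[THEN iffD2, OF Vc]]
      transpose_mult[OF Uc S] by simp
  have "transpose_mat U *\<^sub>v (b - U *\<^sub>v (S *\<^sub>v w)) = r"
    unfolding r_def using Uc S b w
    by (simp add: mult_minus_distrib_mat_vec[of _ m m] orth_mat_transpose_mult_vec_cancel[OF U])
  moreover have "b - U *\<^sub>v (S *\<^sub>v w) \<in> carrier_vec m"
    using b Uc S w by simp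
  ultimately have "transpose_mat A *\<^sub>v (b - A *\<^sub>v (V *\<^sub>v w)) = V *\<^sub>v (transpose_mat S *\<^sub>v r)"
    unfolding A_V At
    by (simp add: assoc_mult_mat_vec[OF Vc mult_carrier_mat[OF St Ut]] assoc_mult_mat_vec[OF St Ut])
  moreover have g: "transpose_mat S *\<^sub>v r \<in> carrier_vec n"
    using St r by simp
  ultimately have "?lhs = V *\<^sub>v w + V *\<^sub>v (E *\<^sub>v (transpose_mat S *\<^sub>v r)) - c \<cdot>\<^sub>v (V *\<^sub>v (E *\<^sub>v w))"
    by (simp add: P_V w)
  also have "\<dots> = V *\<^sub>v (w + E *\<^sub>v (transpose_mat S *\<^sub>v r) - c \<cdot>\<^sub>v (E *\<^sub>v w))"
    using w mult_mat_vec_carrier[OF E g] mult_mat_vec_carrier[OF E w]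
    by (simp add: mult_add_distrib_mat_vec[OF Vc] mult_minus_distrib_mat_vec[OF Vc] mult_mat_vec[OF Vc])
  finally show ?thesis unfolding r_def .
qed

lemma refinement_step_diag_coords:
  fixes \<sigma> \<sigma>M :: "nat \<Rightarrow> real" and \<alpha> :: real
  assumes U: "U \<in> carrier_mat m m" and S: "S \<in> carrier_mat m n" and "n \<le> m"
    and S_diag: "\<And>i j. i < m \<Longrightarrow> j < n \<Longrightarrow> S $$ (i, j) = (if i = j then \<sigma> j else 0)"
    and \<sigma>_nz: "\<And>j. j < n \<Longrightarrow> \<sigma> j \<noteq> 0"
    and b: "b \<in> carrier_vec m"
  defines "E \<equiv> mat_diag n (\<lambda>j. inverse ((\<sigma>M j)\<^sup>2 + \<alpha>\<^sup>2))"
    and "w \<equiv> \<lambda>k. vec n (\<lambda>j. phi (\<sigma> j) (\<sigma>M j) \<alpha> k * ((col U j \<bullet> b) / \<sigma> j))"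
  shows "w k + E *\<^sub>v (transpose_mat S *\<^sub>v (transpose_mat U *\<^sub>v b - S *\<^sub>v w k)) - \<alpha>\<^sup>2 \<cdot>\<^sub>v (E *\<^sub>v w k)
    = w (Suc k)"
proof (rule eq_vecI)
  fix j assume "j < dim_vec (w (Suc k))"
  then have j: "j < n" and "j < m" using \<open>n \<le> m\<close> by (simp_all add: w_def)
  have E: "E \<in> carrier_mat n n" and w: "w k \<in> carrier_vec n"
    by (simp_all add: E_def w_def)
  define c where "c = (col U j \<bullet> b) / \<sigma> j"
  define d where "d = (\<sigma>M j)\<^sup>2 + \<alpha>\<^sup>2"
  define \<phi> where "\<phi> = phi (\<sigma> j) (\<sigma>M j) \<alpha> k"
  have w_j: "w k $ j = \<phi> * c" "w (Suc k) $ j = (\<phi> + ((\<sigma> j)\<^sup>2 * (1 - \<phi>) - \<alpha>\<^sup>2 * \<phi>) / d) * c"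
    using j by (simp_all add: w_def c_def d_def \<phi>_def phi_Suc del: phi.simps)
  have Ub: "(transpose_mat U *\<^sub>v b) $ j = \<sigma> j * c"
    using U \<open>j < m\<close> \<sigma>_nz[OF j] by (simp add: c_def)
  have Sw: "(S *\<^sub>v w k) $ j = \<sigma> j * w k $ j"
    using S w j \<open>j < m\<close> by (intro index_mult_mat_vec_diag[of _ m n _ _ \<sigma>] S_diag) auto
  have St: "(transpose_mat S *\<^sub>v y) $ j = \<sigma> j * y $ j" if "y \<in> carrier_vec m" for y
    using S that j \<open>j < m\<close> by (intro index_mult_mat_vec_diag[of _ n m _ _ \<sigma>]) (auto simp: S_diag)
  have Ev: "(E *\<^sub>v v) $ j = inverse d * v $ j" if "v \<in> carrier_vec n" for v
    using that j unfolding E_def d_def by (intro index_mult_mat_vec_diag[of _ n n]) (auto simp: mat_diag_def)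
  have "(w k + E *\<^sub>v (transpose_mat S *\<^sub>v (transpose_mat U *\<^sub>v b - S *\<^sub>v w k))
      - \<alpha>\<^sup>2 \<cdot>\<^sub>v (E *\<^sub>v w k)) $ j
    = \<phi> * c + inverse d * (\<sigma> j * (\<sigma> j * c - \<sigma> j * (\<phi> * c))) - \<alpha>\<^sup>2 * (inverse d * (\<phi> * c))"
    using j \<open>j < m\<close> E S U b w by (simp add: Ev St Sw Ub w_j del: index_mult_mat_vec)
  also have "\<dots> = w (Suc k) $ j"
    unfolding w_j by (cases "d = 0") (simp_all add: field_simps power2_eq_square)
  finally show "(w k + E *\<^sub>v (transpose_mat S *\<^sub>v (transpose_mat U *\<^sub>v b - S *\<^sub>v w k))
      - \<alpha>\<^sup>2 \<cdot>\<^sub>v (E *\<^sub>v w k)) $ j = w (Suc k) $ j" .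
qed (simp add: w_def E_def mat_diag_def)

lemma x_IR_svd_coords:
  fixes \<sigma> \<sigma>M :: "nat \<Rightarrow> real"
  assumes U: "orth_mat m U" and V: "orth_mat n V" and S: "S \<in> carrier_mat m n" and "n \<le> m"
    and S_diag: "\<And>i j. i < m \<Longrightarrow> j < n \<Longrightarrow> S $$ (i, j) = (if i = j then \<sigma> j else 0)"
    and \<sigma>_nz: "\<And>j. j < n \<Longrightarrow> \<sigma> j \<noteq> 0"
    and b: "b \<in> carrier_vec m"
    and P: "inv_mat n (transpose_mat M * M)
      = V * mat_diag n (\<lambda>j. inverse ((\<sigma>M j)\<^sup>2 + \<alpha>\<^sup>2)) * transpose_mat V"
  shows "x_IR (U * S * transpose_mat V) M \<alpha> b k
    = V *\<^sub>v vec n (\<lambda>j. phi (\<sigma> j) (\<sigma>M j) \<alpha> k * ((col U j \<bullet> b) / \<sigma> j))"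
proof (induction k)
  case 0
  have "V \<in> carrier_mat n n"
    using V by (rule orth_mat_carrier)
  then show ?case by (intro eq_vecI) (auto simp: zero_vec_def[symmetric])
next
  case (Suc k)
  define A where "A = U * S * transpose_mat V"
  define E where "E = mat_diag n (\<lambda>j. inverse ((\<sigma>M j)\<^sup>2 + \<alpha>\<^sup>2))"
  define w where "w = (\<lambda>k. vec n (\<lambda>j. phi (\<sigma> j) (\<sigma>M j) \<alpha> k * ((col U j \<bullet> b) / \<sigma> j)))"
  have E: "E \<in> carrier_mat n n" and w: "w k \<in> carrier_vec n"
    by (simp_all add: E_def w_def)
  have "dim_col A = n"
    unfolding A_def using orth_mat_carrier[OF V] by simp
  then have "x_IR A M \<alpha> b (Suc k)
      = V *\<^sub>v w k + (V * E * transpose_mat V) *\<^sub>v (transpose_mat A *\<^sub>v (b - A *\<^sub>v (V *\<^sub>v w k)))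
        - \<alpha>\<^sup>2 \<cdot>\<^sub>v ((V * E * transpose_mat V) *\<^sub>v (V *\<^sub>v w k))"
    using Suc.IH by (simp add: Let_def P A_def E_def w_def)
  also have "\<dots> = V *\<^sub>v (w k + E *\<^sub>v (transpose_mat S *\<^sub>v (transpose_mat U *\<^sub>v b - S *\<^sub>v w k))
      - \<alpha>\<^sup>2 \<cdot>\<^sub>v (E *\<^sub>v w k))"
    unfolding A_def by (rule refinement_step_orth_coords[OF U V S E b w])
  also have "w k + E *\<^sub>v (transpose_mat S *\<^sub>v (transpose_mat U *\<^sub>v b - S *\<^sub>v w k))
      - \<alpha>\<^sup>2 \<cdot>\<^sub>v (E *\<^sub>v w k) = w (Suc k)"
    unfolding E_def w_def
    by (rule refinement_step_diag_coords[OF orth_mat_carrier[OF U] S \<open>n \<le> m\<close> S_diag \<sigma>_nz b])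
  finally show ?case unfolding A_def w_def .
qed

theorem theorem2:
  fixes m n :: nat
    and A U_A V_A \<Sigma>_A V_M D_M M :: "real mat"
    and \<sigma>_A \<sigma>_M :: "nat \<Rightarrow> real"
    and b :: "real vec" and \<alpha> :: real
  assumes "n \<le> m"
    and "A \<in> carrier_mat m n"
    and "orth_mat m U_A"
    and "orth_mat n V_A"
    and "\<Sigma>_A \<in> carrier_mat m n"
    and "\<And>i j. i < m \<Longrightarrow> j < n \<Longrightarrow> \<Sigma>_A $$ (i, j) = (if i = j then \<sigma>_A j else 0)"
    and "\<And>i j. i \<le> j \<Longrightarrow> j < n \<Longrightarrow> \<sigma>_A j \<le> \<sigma>_A i"
    and "\<And>j. j < n \<Longrightarrow> \<sigma>_A j > 0"
    and "A = U_A * \<Sigma>_A * transpose_mat V_A"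
    and "b \<in> carrier_vec m"
    and "\<alpha> > 0"
    and "orth_mat n V_M"
    and "\<And>j. j < n \<Longrightarrow> \<sigma>_M j \<ge> 0"
    and "D_M = mat n n (\<lambda>(i, j). if i = j then sqrt ((\<sigma>_M j)\<^sup>2 + \<alpha>\<^sup>2) else 0)"
    and "M = D_M * transpose_mat V_M"
    and "transpose_mat V_M * V_A = 1\<^sub>m n"
  shows "x_IR A M \<alpha> b k \<in> carrier_vec n \<and>
         (\<forall>i < n. x_IR A M \<alpha> b k $ i =
            (\<Sum>j<n. phi (\<sigma>_A j) (\<sigma>_M j) \<alpha> k * ((col U_A j \<bullet> b) / \<sigma>_A j) * V_M $$ (i, j)))"
proof -
  note n_le_m = assms(1) and U = assms(3) and V_A = assms(4) and S = assms(5) and S_diag = assms(6)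
    and \<sigma>_pos = assms(8) and A = assms(9) and b = assms(10) and \<alpha> = assms(11) and V = assms(12)
    and D_M = assms(14) and M = assms(15) and V_M_V_A = assms(16)
  define d where "d j = (\<sigma>_M j)\<^sup>2 + \<alpha>\<^sup>2" for j
  have d_pos: "d j > 0" for j
    unfolding d_def using \<alpha> by (simp add: add_nonneg_pos)
  have "V_A = V_M"
    using orth_mat_eq_of_transpose_mult[OF V _ V_M_V_A] V_A by (simp add: orth_mat_carrier)
  have "D_M = mat_diag n (\<lambda>j. sqrt (d j))"
    unfolding D_M mat_diag_def d_def ..
  then have "transpose_mat M * M = V_M * mat_diag n (\<lambda>j. (sqrt (d j))\<^sup>2) * transpose_mat V_M"
    unfolding M by (simp add: transpose_mult_self_diag_transpose orth_mat_carrier[OF V])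
  also have "(\<lambda>j. (sqrt (d j))\<^sup>2) = d"
    using d_pos by (simp add: less_imp_le)
  finally have "transpose_mat M * M = V_M * mat_diag n d * transpose_mat V_M" .
  then have "inv_mat n (transpose_mat M * M) = V_M * mat_diag n (\<lambda>j. inverse (d j)) * transpose_mat V_M"
    using d_pos by (simp add: inv_mat_orth_conj[OF V] less_imp_neq[symmetric])
  then have x: "x_IR A M \<alpha> b k
      = V_M *\<^sub>v vec n (\<lambda>j. phi (\<sigma>_A j) (\<sigma>_M j) \<alpha> k * ((col U_A j \<bullet> b) / \<sigma>_A j))"
    unfolding A \<open>V_A = V_M\<close> d_def
    by (intro x_IR_svd_coords[OF U V S n_le_m S_diag _ b]) (auto dest: \<sigma>_pos)
  show ?thesis
    unfolding x using orth_mat_carrier[OF V]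
    by (auto simp: scalar_prod_def lessThan_atLeast0 intro!: sum.cong)
qed

end
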